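(* Let $\mathbb L$ be a combinatorially indecomposable tropical Lagrangian multi-section of rank $r$ over a complete fan $\Sigma$ in $N_{\mathbb R}\cong\mathbb R^n$. For any $\tau\in\Sigma(n-1)$ and any cone $\omega'$ of $L$, the endomorphism $N_\tau(\omega')$ is nilpotent, and for any distinct cones $\omega'\ne\omega''$ of $L$ lying over the same cone $\omega\in\Sigma$, $N_\tau(\omega')N_\tau(\omega'')=0$. In particular, $[N_\tau(\omega'),N_\tau(\omega'')]=0$ for any cones $\omega',\omega''$ of $L$ lying over the same $\omega$.
   Context: $N$ lattice of rank $n$, $M=\mathrm{Hom}(N,\mathbb Z)$, $\Sigma(k)$ the $k$-dimensional cones of $\Sigma$, $\tau^\vee$ the dual cone, $U(\tau)=\mathrm{Spec}\,\mathbb C[\tau^\vee\cap M]$, $z^m$ monomials. $\mathbb L=(L,\Sigma_L,\mu,\pi,\varphi)$: $(L,\Sigma_L)$ a cone complex (finite union of closed cones each identified with a rational polyhedral cone, faces being cones, $L$ the disjoint union of relative interiors), $\mu$ a positive integer weight constant on relative interiors, $\pi$ a branched covering onto $(N_{\mathbb R},\Sigma)$ mapping cones homeomorphically onto cones with weighted fibre count $r$, $\varphi$ continuous and integral linear on each cone. $m(\sigma')\in M$ is the slope of $\varphi$ on a maximal cone $\sigma'$; for $\sigma\in\Sigma(n)$, $\sigma^{(1)},\dots,\sigma^{(r)}$ are its lifts listed with multiplicity. Combinatorially indecomposable: not combinatorially equivalent to a combinatorial union of two connected tropical Lagrangian multi-sections; such $\mathbb L$ is $(n-1)$-separable, i.e.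 distinct lifts of any $\tau\in\Sigma(n-1)$ carry distinct restrictions of $\varphi$, and its ramification locus lies in the union of cones of dimension $\le n-2$. $N_\tau(\omega')$: let $\tau=\sigma_1\cap\sigma_2$ with $\sigma_1,\sigma_2\in\Sigma(n)$. $N_\tau(\omega')$ is the endomorphism of the trivial rank $r$ bundle on $U(\tau)$ with frame $\{1(\sigma_1^{(\alpha)})\}$ whose $(\alpha,\beta)$-entry is $n^{(\alpha\beta)}_\tau(\omega')z^{m(\sigma_1^{(\alpha)})-m(\sigma_1^{(\beta)})}$, for arbitrary fixed constants $n^{(\alpha\beta)}_\tau(\omega')\in\mathbb C$, if $\omega'\subset\sigma_1^{(\alpha)}\cap\sigma_1^{(\beta)}$, $\alpha\ne\beta$ and $m(\sigma_1^{(\alpha)})-m(\sigma_1^{(\beta)})\in\tau^\vee\cap M$, and $0$ otherwise. *)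

theory Defs
  imports "HOL-Analysis.Analysis" "HOL-Library.Poly_Mapping" "Jordan_Normal_Form.Matrix"
begin

text \<open>N = Z^n is modelled as int^'n (n = CARD('n)), N_R = real^'n; M = Hom(N,Z) is identified
  with int^'n via the standard dot product.\<close>

definition ofv :: "int^'n \<Rightarrow> real^'n" where
  "ofv m = (\<chi> i. real_of_int (m $ i))"

definition rat_poly_cone :: "(real^'n) set \<Rightarrow> bool" where
  "rat_poly_cone C \<longleftrightarrow> (\<exists>S. finite S \<and> S \<subseteq> range ofv \<and>
      C = {x. \<exists>a. (\<forall>v\<in>S. 0 \<le> a v) \<and> x = (\<Sum>v\<in>S. a v *\<^sub>R v)})"

definition fan :: "(real^'n) set set \<Rightarrow> bool" where
  "fan Sig \<longleftrightarrow> finite Sig \<and>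
     (\<forall>C\<in>Sig. rat_poly_cone C \<and> C \<inter> uminus ` C = {0}) \<and>
     (\<forall>C\<in>Sig. \<forall>F. F face_of C \<and> F \<noteq> {} \<longrightarrow> F \<in> Sig) \<and>
     (\<forall>C\<in>Sig. \<forall>D\<in>Sig. (C \<inter> D) face_of C \<and> (C \<inter> D) face_of D)"

definition complete_fan :: "(real^'n) set set \<Rightarrow> bool" where
  "complete_fan Sig \<longleftrightarrow> fan Sig \<and> \<Union>Sig = UNIV"

definition cones_of_dim :: "(real^'n) set set \<Rightarrow> nat \<Rightarrow> (real^'n) set set" where
  "cones_of_dim Sig k = {C\<in>Sig. aff_dim C = int k}"

definition dual_lattice_pts :: "(real^'n) set \<Rightarrow> (int^'n) set" where
  "dual_lattice_pts tau = {m. \<forall>v\<in>tau. 0 \<le> ofv m \<bullet> v}"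

text \<open>The cone complex L is given combinatorially: a finite set Lc of (closed) cones,
  the face relation facL (facL c' c: c' is a face of c), the weight mu, the map pr (= the covering map pi) sending
  each cone of L homeomorphically (and linearly) onto a cone of Sigma, and phi c, the function
  phi on the cone c, transported to pr c via pr.\<close>
definition trop_lag_multisection ::
  "(real^'n) set set \<Rightarrow> 'c set \<Rightarrow> ('c \<Rightarrow> 'c \<Rightarrow> bool) \<Rightarrow> ('c \<Rightarrow> nat) \<Rightarrow>
   ('c \<Rightarrow> (real^'n) set) \<Rightarrow> ('c \<Rightarrow> real^'n \<Rightarrow> real) \<Rightarrow> nat \<Rightarrow> bool" where
  "trop_lag_multisection Sig Lc facL mu pr phi r \<longleftrightarrow>
     finite Lc \<and>
     (\<forall>c\<in>Lc. facL c c) \<and>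
     (\<forall>c\<in>Lc. \<forall>d\<in>Lc. facL c d \<and> facL d c \<longrightarrow> c = d) \<and>
     (\<forall>c\<in>Lc. \<forall>d\<in>Lc. \<forall>e\<in>Lc. facL c d \<and> facL d e \<longrightarrow> facL c e) \<and>
     (\<forall>c\<in>Lc. pr c \<in> Sig) \<and>
     (\<forall>c\<in>Lc. bij_betw pr {d\<in>Lc. facL d c} {F\<in>Sig. F face_of pr c}) \<and>
     (\<forall>c\<in>Lc. 0 < mu c) \<and>
     (\<forall>w\<in>Sig. (\<Sum>c\<in>{c\<in>Lc. pr c = w}. mu c) = r) \<and>
     (\<forall>c\<in>Lc. \<exists>m. \<forall>x\<in>pr c. phi c x = ofv m \<bullet> x) \<and>
     (\<forall>c\<in>Lc. \<forall>d\<in>Lc. facL d c \<longrightarrow> (\<forall>x\<in>pr d. phi d x = phi c x))"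

text \<open>pr is unramified along (the relative interior of) the cone c: weight one and pr maps
  the star of c bijectively onto the star of pr c (local homeomorphism).\<close>
definition unramified_at ::
  "(real^'n) set set \<Rightarrow> 'c set \<Rightarrow> ('c \<Rightarrow> 'c \<Rightarrow> bool) \<Rightarrow> ('c \<Rightarrow> nat) \<Rightarrow>
   ('c \<Rightarrow> (real^'n) set) \<Rightarrow> 'c \<Rightarrow> bool" where
  "unramified_at Sig Lc facL mu pr c \<longleftrightarrow> mu c = 1 \<and>
     (\<forall>w\<in>Sig. pr c face_of w \<longrightarrow> (\<exists>!d. d \<in> Lc \<and> facL c d \<and> pr d = w))"

definition ramification_in_codim2 ::
  "(real^'n) set set \<Rightarrow> 'c set \<Rightarrow> ('c \<Rightarrow> 'c \<Rightarrow> bool) \<Rightarrow> ('c \<Rightarrow> nat) \<Rightarrow>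
   ('c \<Rightarrow> (real^'n) set) \<Rightarrow> bool" where
  "ramification_in_codim2 Sig Lc facL mu pr \<longleftrightarrow>
     (\<forall>c\<in>Lc. int CARD('n) - 1 \<le> aff_dim (pr c) \<longrightarrow> unramified_at Sig Lc facL mu pr c)"

definition codim1_separable ::
  "(real^'n) set set \<Rightarrow> 'c set \<Rightarrow> ('c \<Rightarrow> (real^'n) set) \<Rightarrow> ('c \<Rightarrow> real^'n \<Rightarrow> real) \<Rightarrow> bool" where
  "codim1_separable Sig Lc pr phi \<longleftrightarrow>
     (\<forall>tau\<in>cones_of_dim Sig (CARD('n) - 1). \<forall>c\<in>Lc. \<forall>d\<in>Lc.
        pr c = tau \<and> pr d = tau \<and> c \<noteq> d \<longrightarrow> (\<exists>x\<in>tau. phi c x \<noteq> phi d x))"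

definition slope :: "('c \<Rightarrow> (real^'n) set) \<Rightarrow> ('c \<Rightarrow> real^'n \<Rightarrow> real) \<Rightarrow> 'c \<Rightarrow> int^'n" where
  "slope pr phi c = (SOME m. \<forall>x\<in>pr c. phi c x = ofv m \<bullet> x)"

text \<open>lift 0, ..., lift (r-1): the lifts sg^(1),...,sg^(r) of sg, listed with
  multiplicity mu.\<close>
definition lifts_listing ::
  "'c set \<Rightarrow> ('c \<Rightarrow> nat) \<Rightarrow> ('c \<Rightarrow> (real^'n) set) \<Rightarrow> nat \<Rightarrow> (real^'n) set \<Rightarrow> (nat \<Rightarrow> 'c) \<Rightarrow> bool" where
  "lifts_listing Lc mu pr r sg lift \<longleftrightarrow>
     (\<forall>a<r. lift a \<in> Lc \<and> pr (lift a) = sg) \<and>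
     (\<forall>c\<in>Lc. pr c = sg \<longrightarrow> card {a. a < r \<and> lift a = c} = mu c)"

text \<open>Monomial z^m in the group ring C[M] (Laurent polynomials); C[tau^vee \<inter> M] is the
  subring spanned by monomials with exponents in dual_lattice_pts tau.\<close>
definition monom_z :: "int^'n \<Rightarrow> complex \<Rightarrow> ((int^'n) \<Rightarrow>\<^sub>0 complex)" where
  "monom_z m a = Poly_Mapping.single m a"

text \<open>The endomorphism N_tau(omega') of the trivial rank r bundle on U(tau), as an r x r
  matrix in the frame 1(sigma_1^(alpha)); ncoef a b = n_tau^(ab)(omega').\<close>
definition N_endo ::
  "('c \<Rightarrow> 'c \<Rightarrow> bool) \<Rightarrow> ('c \<Rightarrow> (real^'n) set) \<Rightarrow> ('c \<Rightarrow> real^'n \<Rightarrow> real) \<Rightarrow> nat \<Rightarrow>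
   (real^'n) set \<Rightarrow> (nat \<Rightarrow> 'c) \<Rightarrow> (nat \<Rightarrow> nat \<Rightarrow> complex) \<Rightarrow> 'c \<Rightarrow>
   ((int^'n) \<Rightarrow>\<^sub>0 complex) mat" where
  "N_endo facL pr phi r tau lift ncoef w =
     mat r r (\<lambda>(a, b).
       if facL w (lift a) \<and> facL w (lift b) \<and> a \<noteq> b \<and>
          slope pr phi (lift a) - slope pr phi (lift b) \<in> dual_lattice_pts tau
       then monom_z (slope pr phi (lift a) - slope pr phi (lift b)) (ncoef a b)
       else 0)"

definition nilpotent_mat :: "'a::semiring_1 mat \<Rightarrow> bool" where
  "nilpotent_mat A \<longleftrightarrow> (\<exists>k. A ^\<^sub>m k = 0\<^sub>m (dim_row A) (dim_col A))"

end

theory Submission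
  imports Defs
begin

text \<open>Since the ramification locus avoids the cones of dimension \<open>\<ge> n - 1\<close>, the lifts of the
  maximal cone \<open>\<sigma>\<^sub>1\<close> are listed without repetition, and each of them has exactly one facet
  over \<open>\<tau>\<close>, which in turn lies in no other lift of \<open>\<sigma>\<^sub>1\<close>. If both \<open>m(\<sigma>\<^sub>1\<^sup>(\<alpha>)) - m(\<sigma>\<^sub>1\<^sup>(\<beta>))\<close> and its
  negative lay in \<open>\<tau>\<^sup>\<or>\<close>, the two slopes would agree on \<open>\<tau>\<close>, so by \<open>(n-1)\<close>-separability the facets
  over \<open>\<tau>\<close> and hence the lifts would coincide. Thus \<open>\<alpha> \<prec> \<beta> \<longleftrightarrow> \<alpha> \<noteq> \<beta> \<and> m(\<sigma>\<^sub>1\<^sup>(\<alpha>)) - m(\<sigma>\<^sub>1\<^sup>(\<beta>)) \<in> \<tau>\<^sup>\<or>\<close>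
  is a strict partial order on the frame, every \<open>N\<^sub>\<tau>(\<omega>')\<close> is supported on it, and so is
  nilpotent. A nonzero entry of \<open>N\<^sub>\<tau>(\<omega>') N\<^sub>\<tau>(\<omega>'')\<close> needs a lift \<open>\<sigma>\<^sub>1\<^sup>(\<gamma>)\<close> containing both \<open>\<omega>'\<close>
  and \<open>\<omega>''\<close>; as \<open>\<pi>\<close> is injective on the faces of a cone of \<open>L\<close>, this forces \<open>\<omega>' = \<omega>''\<close>.\<close>

lemma index_mult_mat_nonzero:
  fixes A B :: "'a::semiring_0 mat"
  assumes "A \<in> carrier_mat r r" "B \<in> carrier_mat r r" "i < r" "j < r" "(A * B) $$ (i,j) \<noteq> 0"
  shows "\<exists>l<r. A $$ (i,l) \<noteq> 0 \<and> B $$ (l,j) \<noteq> 0"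
proof -
  have "(\<Sum>l\<in>{0..<r}. A $$ (i,l) * B $$ (l,j)) \<noteq> 0"
    using assms by (simp add: scalar_prod_def)
  then obtain l where "l < r" "A $$ (i,l) * B $$ (l,j) \<noteq> 0"
    by (meson atLeastLessThan_iff sum.neutral)
  then show ?thesis by auto
qed

lemma nilpotent_mat_if_entries_decrease:
  fixes A :: "'a::semiring_1 mat" and h :: "nat \<Rightarrow> nat"
  assumes A: "A \<in> carrier_mat r r"
    and decrease: "\<And>i j. i < r \<Longrightarrow> j < r \<Longrightarrow> A $$ (i,j) \<noteq> 0 \<Longrightarrow> h j < h i"
    and bounded: "\<And>i. i < r \<Longrightarrow> h i < r"
  shows "nilpotent_mat A"
proof -
  have pow_entry: "\<forall>i<r. \<forall>j<r. (A ^\<^sub>m k) $$ (i,j) \<noteq> 0 \<longrightarrow> h j + k \<le> h i" for k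
  proof (induction k)
    case 0
    then show ?case using A by auto
  next
    case (Suc k)
    show ?case
    proof (intro allI impI)
      fix i j assume ij: "i < r" "j < r" "(A ^\<^sub>m Suc k) $$ (i,j) \<noteq> 0"
      then obtain l where l: "l < r" "(A ^\<^sub>m k) $$ (i,l) \<noteq> 0" "A $$ (l,j) \<noteq> 0"
        using index_mult_mat_nonzero[of "A ^\<^sub>m k" r A i j] A by auto
      then show "h j + Suc k \<le> h i"
        using decrease[of l j] Suc.IH ij by fastforce
    qed
  qed
  have "A ^\<^sub>m r = 0\<^sub>m r r"
    by (rule eq_matI) (use A pow_entry bounded in fastforce)+
  then show ?thesis unfolding nilpotent_mat_def using A by auto
qed

lemma nilpotent_mat_if_support_strict_order:
  fixes A :: "'a::semiring_1 mat"
  assumes A: "A \<in> carrier_mat r r"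
    and irrefl: "\<And>a. \<not> R a a"
    and trans: "\<And>a b c. R a b \<Longrightarrow> R b c \<Longrightarrow> R a c"
    and support: "\<And>i j. i < r \<Longrightarrow> j < r \<Longrightarrow> A $$ (i,j) \<noteq> 0 \<Longrightarrow> R i j"
  shows "nilpotent_mat A"
proof -
  define h where "h a = card {b. b < r \<and> R a b}" for a
  show ?thesis
  proof (rule nilpotent_mat_if_entries_decrease[OF A, of h])
    fix i j assume "i < r" "j < r" "A $$ (i,j) \<noteq> 0"
    then have "R i j" by (rule support)
    then have "{b. b < r \<and> R j b} \<subset> {b. b < r \<and> R i b}"
      using trans irrefl \<open>j < r\<close> by blast
    then show "h j < h i"
      unfolding h_def by (rule psubset_card_mono[rotated]) simp
  next
    fix i assume "i < r"
    then have "{b. b < r \<and> R i b} \<subset> {..<r}" using irrefl by blast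
    then show "h i < r"
      unfolding h_def by (metis card_lessThan finite_lessThan psubset_card_mono)
  qed
qed

lemma ofv_add: "ofv (a + b) = ofv a + ofv b"
  by (simp add: ofv_def Finite_Cartesian_Product.vec_eq_iff)

lemma ofv_uminus: "ofv (- a) = - ofv a"
  by (simp add: ofv_def Finite_Cartesian_Product.vec_eq_iff)

lemma ofv_diff: "ofv (a - b) = ofv a - ofv b"
  by (simp add: ofv_def Finite_Cartesian_Product.vec_eq_iff)

lemma dual_lattice_pts_add:
  "a \<in> dual_lattice_pts C \<Longrightarrow> b \<in> dual_lattice_pts C \<Longrightarrow> a + b \<in> dual_lattice_pts C"
  by (simp add: dual_lattice_pts_def ofv_add inner_add_left)

lemma dual_lattice_pts_antisym:
  assumes "a \<in> dual_lattice_pts C" "- a \<in> dual_lattice_pts C" "x \<in> C"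
  shows "ofv a \<bullet> x = 0"
  using assms by (force simp: dual_lattice_pts_def ofv_uminus)

lemma multisection_phi_eq_slope:
  assumes "trop_lag_multisection Sig Lc facL mu pr phi r" "c \<in> Lc" "x \<in> pr c"
  shows "phi c x = ofv (slope pr phi c) \<bullet> x"
proof -
  have "\<exists>m. \<forall>x\<in>pr c. phi c x = ofv m \<bullet> x"
    using assms(1,2) unfolding trop_lag_multisection_def by blast
  then have "\<forall>x\<in>pr c. phi c x = ofv (slope pr phi c) \<bullet> x"
    unfolding slope_def by (rule someI_ex)
  then show ?thesis using assms(3) by blast
qed

lemma multisection_phi_face:
  assumes "trop_lag_multisection Sig Lc facL mu pr phi r" "c \<in> Lc" "d \<in> Lc" "facL d c" "x \<in> pr d"
  shows "phi d x = phi c x"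
proof -
  have "\<forall>c\<in>Lc. \<forall>d\<in>Lc. facL d c \<longrightarrow> (\<forall>x\<in>pr d. phi d x = phi c x)"
    using assms(1) unfolding trop_lag_multisection_def by (elim conjE)
  then show ?thesis using assms(2-5) by blast
qed

lemma multisection_faces_bij:
  assumes "trop_lag_multisection Sig Lc facL mu pr phi r" "c \<in> Lc"
  shows "bij_betw pr {d\<in>Lc. facL d c} {F\<in>Sig. F face_of pr c}"
  using assms unfolding trop_lag_multisection_def by blast

lemma multisection_face_over:
  assumes "trop_lag_multisection Sig Lc facL mu pr phi r" "c \<in> Lc" "F \<in> Sig" "F face_of pr c"
  shows "\<exists>d\<in>Lc. facL d c \<and> pr d = F"
proof -
  have "F \<in> pr ` {d\<in>Lc. facL d c}"
    using multisection_faces_bij[OF assms(1,2)] assms(3,4) by (simp add: bij_betw_def)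
  then show ?thesis by blast
qed

lemma lifts_listing_inj_on:
  assumes "lifts_listing Lc mu pr r \<sigma> lift" "\<And>c. c \<in> Lc \<Longrightarrow> pr c = \<sigma> \<Longrightarrow> mu c = 1"
  shows "inj_on lift {..<r}"
proof (rule inj_onI)
  fix a b assume ab: "a \<in> {..<r}" "b \<in> {..<r}" "lift a = lift b"
  have listing: "\<forall>a<r. lift a \<in> Lc \<and> pr (lift a) = \<sigma>"
      "\<forall>c\<in>Lc. pr c = \<sigma> \<longrightarrow> card {a. a < r \<and> lift a = c} = mu c"
    using assms(1) unfolding lifts_listing_def by blast+
  have "lift a \<in> Lc" "pr (lift a) = \<sigma>" using listing(1) ab by simp_all
  then have "card {a'. a' < r \<and> lift a' = lift a} = 1"
    using listing(2) assms(2) by simp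
  then obtain z where z: "{a'. a' < r \<and> lift a' = lift a} = {z}"
    by (rule card_1_singletonE)
  have "a \<in> {a'. a' < r \<and> lift a' = lift a}" "b \<in> {a'. a' < r \<and> lift a' = lift a}"
    using ab by simp_all
  then show "a = b" unfolding z by simp
qed

lemma multisection_lifts_eq_if_slopes_agree_on_facet:
  fixes Sig :: "(real^'n) set set"
  assumes L: "trop_lag_multisection Sig Lc facL mu pr phi r"
    and separable: "codim1_separable Sig Lc pr phi"
    and ramification: "ramification_in_codim2 Sig Lc facL mu pr"
    and tau: "tau \<in> cones_of_dim Sig (CARD('n) - 1)"
    and \<sigma>: "\<sigma> \<in> Sig" "tau face_of \<sigma>"
    and c: "c1 \<in> Lc" "c2 \<in> Lc" "pr c1 = \<sigma>" "pr c2 = \<sigma>"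
    and agree: "\<And>x. x \<in> tau \<Longrightarrow> ofv (slope pr phi c1) \<bullet> x = ofv (slope pr phi c2) \<bullet> x"
  shows "c1 = c2"
proof -
  have tau_Sig: "tau \<in> Sig" using tau unfolding cones_of_dim_def by blast
  obtain d1 where d1: "d1 \<in> Lc" "facL d1 c1" "pr d1 = tau"
    using multisection_face_over[OF L c(1) tau_Sig] \<sigma> c by auto
  obtain d2 where d2: "d2 \<in> Lc" "facL d2 c2" "pr d2 = tau"
    using multisection_face_over[OF L c(2) tau_Sig] \<sigma> c by auto
  have "phi d1 x = phi d2 x" if x: "x \<in> tau" for x
  proof -
    have "x \<in> \<sigma>" using x \<sigma> face_of_imp_subset by blast
    have "phi d1 x = ofv (slope pr phi c1) \<bullet> x"
      using multisection_phi_face[OF L c(1) d1(1,2)] multisection_phi_eq_slope[OF L c(1)]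
        d1(3) c(3) x \<open>x \<in> \<sigma>\<close>
      by simp
    also have "\<dots> = ofv (slope pr phi c2) \<bullet> x" using agree[OF x] .
    also have "\<dots> = phi d2 x"
      using multisection_phi_face[OF L c(2) d2(1,2)] multisection_phi_eq_slope[OF L c(2)]
        d2(3) c(4) x \<open>x \<in> \<sigma>\<close>
      by simp
    finally show ?thesis .
  qed
  moreover have "\<forall>c\<in>Lc. \<forall>d\<in>Lc. pr c = tau \<and> pr d = tau \<and> c \<noteq> d \<longrightarrow>
      (\<exists>x\<in>tau. phi c x \<noteq> phi d x)"
    using separable tau unfolding codim1_separable_def by blast
  ultimately have "d1 = d2" using d1 d2 by blast
  have "aff_dim (pr d1) = int CARD('n) - 1"
    using d1 tau unfolding cones_of_dim_def by simp
  then have "unramified_at Sig Lc facL mu pr d1"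
    using ramification d1 unfolding ramification_in_codim2_def by simp
  then have "\<exists>!c. c \<in> Lc \<and> facL d1 c \<and> pr c = \<sigma>"
    using \<sigma> d1 unfolding unramified_at_def by blast
  then show ?thesis using c d1 d2 \<open>d1 = d2\<close> by blast
qed

lemma lifts_listing_slope_antisym:
  fixes Sig :: "(real^'n) set set"
  assumes L: "trop_lag_multisection Sig Lc facL mu pr phi r"
    and separable: "codim1_separable Sig Lc pr phi"
    and ramification: "ramification_in_codim2 Sig Lc facL mu pr"
    and tau: "tau \<in> cones_of_dim Sig (CARD('n) - 1)"
    and \<sigma>: "\<sigma> \<in> cones_of_dim Sig CARD('n)" "tau face_of \<sigma>"
    and listing: "lifts_listing Lc mu pr r \<sigma> lift"
    and ab: "a < r" "b < r"
    and dual: "slope pr phi (lift a) - slope pr phi (lift b) \<in> dual_lattice_pts tau"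
      "slope pr phi (lift b) - slope pr phi (lift a) \<in> dual_lattice_pts tau"
  shows "a = b"
proof -
  have lifts: "lift a \<in> Lc" "pr (lift a) = \<sigma>" if "a < r" for a
    using listing that unfolding lifts_listing_def by auto
  have "mu c = 1" if "c \<in> Lc" "pr c = \<sigma>" for c
    using ramification that \<sigma> unfolding ramification_in_codim2_def unramified_at_def cones_of_dim_def
    by simp
  then have lift_inj: "inj_on lift {..<r}"
    using lifts_listing_inj_on[OF listing] by blast
  have "ofv (slope pr phi (lift a)) \<bullet> x = ofv (slope pr phi (lift b)) \<bullet> x" if "x \<in> tau" for x
    using dual_lattice_pts_antisym[OF dual(1) _ that] dual(2)
    by (simp add: ofv_diff inner_diff_left)
  moreover have "\<sigma> \<in> Sig" using \<sigma> unfolding cones_of_dim_def by blast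
  ultimately have "lift a = lift b"
    using multisection_lifts_eq_if_slopes_agree_on_facet[OF L separable ramification tau _ \<sigma>(2)]
      lifts ab by blast
  then show ?thesis using lift_inj ab by (simp add: inj_on_eq_iff)
qed

lemma N_endo_nonzero_entry:
  assumes "i < r" "j < r" "N_endo facL pr phi r tau lift ncoef w $$ (i,j) \<noteq> 0"
  shows "facL w (lift i) \<and> facL w (lift j) \<and> i \<noteq> j \<and>
    slope pr phi (lift i) - slope pr phi (lift j) \<in> dual_lattice_pts tau"
  using assms unfolding N_endo_def by (auto split: if_splits)

lemma N_endo_carrier_mat: "N_endo facL pr phi r tau lift ncoef w \<in> carrier_mat r r"
  unfolding N_endo_def by simp

lemma N_endo_nilpotent:
  assumes antisym: "\<And>a b. a < r \<Longrightarrow> b < r \<Longrightarrow>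
      slope pr phi (lift a) - slope pr phi (lift b) \<in> dual_lattice_pts tau \<Longrightarrow>
      slope pr phi (lift b) - slope pr phi (lift a) \<in> dual_lattice_pts tau \<Longrightarrow> a = b"
  shows "nilpotent_mat (N_endo facL pr phi r tau lift ncoef w)"
proof -
  define m where "m a = slope pr phi (lift a)" for a
  define R where "R a b \<longleftrightarrow> a < r \<and> b < r \<and> a \<noteq> b \<and> m a - m b \<in> dual_lattice_pts tau"
    for a b
  show ?thesis
  proof (rule nilpotent_mat_if_support_strict_order[OF N_endo_carrier_mat, where R = R])
    show "\<not> R a a" for a unfolding R_def by simp
  next
    fix a b c assume ab: "R a b" and bc: "R b c"
    have "(m a - m b) + (m b - m c) \<in> dual_lattice_pts tau"
      using ab bc dual_lattice_pts_add unfolding R_def by blast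
    then have "m a - m c \<in> dual_lattice_pts tau" by simp
    moreover have "a \<noteq> c"
    proof
      assume "a = c"
      then have "a = b" using ab bc antisym[of a b] unfolding R_def m_def by simp
      then show False using ab unfolding R_def by simp
    qed
    ultimately show "R a c" using ab bc unfolding R_def by simp
  next
    fix i j assume ij: "i < r" "j < r" and nz: "N_endo facL pr phi r tau lift ncoef w $$ (i,j) \<noteq> 0"
    show "R i j" using N_endo_nonzero_entry[OF ij nz] ij unfolding R_def m_def by simp
  qed
qed

lemma N_endo_mult_eq_0:
  assumes L: "trop_lag_multisection Sig Lc facL mu pr phi r"
    and lifts: "\<And>a. a < r \<Longrightarrow> lift a \<in> Lc"
    and w: "w1 \<in> Lc" "w2 \<in> Lc" "w1 \<noteq> w2" "pr w1 = pr w2"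
  shows "N_endo facL pr phi r tau lift ncoef1 w1 * N_endo facL pr phi r tau lift ncoef2 w2
    = 0\<^sub>m r r" (is "?N1 * ?N2 = _")
proof (rule eq_matI)
  fix i j assume "i < dim_row (0\<^sub>m r r :: ((int^'n) \<Rightarrow>\<^sub>0 complex) mat)"
    "j < dim_col (0\<^sub>m r r :: ((int^'n) \<Rightarrow>\<^sub>0 complex) mat)"
  then have ij: "i < r" "j < r" by auto
  show "(?N1 * ?N2) $$ (i,j) = 0\<^sub>m r r $$ (i,j)"
  proof (rule ccontr)
    assume "(?N1 * ?N2) $$ (i,j) \<noteq> 0\<^sub>m r r $$ (i,j)"
    then have "(?N1 * ?N2) $$ (i,j) \<noteq> 0" using ij by simp
    then have "\<exists>l<r. ?N1 $$ (i,l) \<noteq> 0 \<and> ?N2 $$ (l,j) \<noteq> 0"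
      by (rule index_mult_mat_nonzero[OF N_endo_carrier_mat N_endo_carrier_mat ij])
    then obtain l where l: "l < r" "?N1 $$ (i,l) \<noteq> 0" "?N2 $$ (l,j) \<noteq> 0"
      by blast
    then have "facL w1 (lift l)" "facL w2 (lift l)"
      using N_endo_nonzero_entry[OF ij(1) l(1,2)] N_endo_nonzero_entry[OF l(1) ij(2) l(3)] by simp_all
    then have "w1 = w2"
      using multisection_faces_bij[OF L lifts[OF l(1)]] w unfolding bij_betw_def inj_on_def by blast
    then show False using w by blast
  qed
qed (simp_all add: N_endo_def)

theorem lemma4p12:
  fixes Sig :: "(real^'n) set set"
    and Lc :: "'c set" and facL :: "'c \<Rightarrow> 'c \<Rightarrow> bool" and mu :: "'c \<Rightarrow> nat"
    and pr :: "'c \<Rightarrow> (real^'n) set" and phi :: "'c \<Rightarrow> real^'n \<Rightarrow> real" and r :: nat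
    and tau sigma1 sigma2 :: "(real^'n) set" and lift :: "nat \<Rightarrow> 'c"
    and ncoef :: "'c \<Rightarrow> nat \<Rightarrow> nat \<Rightarrow> complex"
  assumes "complete_fan Sig"
    and "trop_lag_multisection Sig Lc facL mu pr phi r"
    and "codim1_separable Sig Lc pr phi"
    and "ramification_in_codim2 Sig Lc facL mu pr"
    and "tau \<in> cones_of_dim Sig (CARD('n) - 1)"
    and "sigma1 \<in> cones_of_dim Sig CARD('n)" and "sigma2 \<in> cones_of_dim Sig CARD('n)"
    and "tau = sigma1 \<inter> sigma2"
    and "lifts_listing Lc mu pr r sigma1 lift"
  shows "(\<forall>w\<in>Lc. nilpotent_mat (N_endo facL pr phi r tau lift (ncoef w) w))
    \<and> (\<forall>w1\<in>Lc. \<forall>w2\<in>Lc. w1 \<noteq> w2 \<and> pr w1 = pr w2 \<longrightarrow>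
         N_endo facL pr phi r tau lift (ncoef w1) w1 * N_endo facL pr phi r tau lift (ncoef w2) w2
           = 0\<^sub>m r r)
    \<and> (\<forall>w1\<in>Lc. \<forall>w2\<in>Lc. pr w1 = pr w2 \<longrightarrow>
         N_endo facL pr phi r tau lift (ncoef w1) w1 * N_endo facL pr phi r tau lift (ncoef w2) w2
         - N_endo facL pr phi r tau lift (ncoef w2) w2 * N_endo facL pr phi r tau lift (ncoef w1) w1
           = 0\<^sub>m r r)"
proof -
  define N where "N = N_endo facL pr phi r tau lift"
  have "tau face_of sigma1"
    using assms(1,6-8) unfolding complete_fan_def fan_def cones_of_dim_def by blast
  have lifts: "lift a \<in> Lc" if "a < r" for a
    using assms(9) that unfolding lifts_listing_def by auto
  have "nilpotent_mat (N (ncoef w) w)" for w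
    unfolding N_def by (rule N_endo_nilpotent, rule lifts_listing_slope_antisym)
      (use assms(2-6,9) \<open>tau face_of sigma1\<close> in auto)
  moreover have product: "N (ncoef w1) w1 * N (ncoef w2) w2 = 0\<^sub>m r r"
    if "w1 \<in> Lc" "w2 \<in> Lc" "w1 \<noteq> w2" "pr w1 = pr w2" for w1 w2
    unfolding N_def by (rule N_endo_mult_eq_0[OF assms(2)]) (use lifts that in auto)
  moreover have "N (ncoef w1) w1 * N (ncoef w2) w2 - N (ncoef w2) w2 * N (ncoef w1) w1 = 0\<^sub>m r r"
    if "w1 \<in> Lc" "w2 \<in> Lc" "pr w1 = pr w2" for w1 w2
  proof (cases "w1 = w2")
    case True
    have "N (ncoef w1) w1 * N (ncoef w1) w1 \<in> carrier_mat r r"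
      unfolding N_def by (rule mult_carrier_mat) (rule N_endo_carrier_mat)+
    then show ?thesis using True by simp
  next
    case False
    then show ?thesis using product that by simp
  qed
  ultimately show ?thesis unfolding N_def by blast
qed

end
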